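(* Let $A$ be the $8$-dimensional Hopf algebra of the context and $\tau$ a Hopf automorphism of $A$, identified with the matrix $\begin{pmatrix}a&b\\c&d\end{pmatrix}$ by $\tau(x)=ax+by$, $\tau(y)=cx+dy$ (and $\tau(g)=g$). (1) If $\tau^2=1$ and $m$ is a positive even integer, then $\nu_{m,\tau}(A)=\frac{m^2}{2}\big(1+\det(\tau)\big)$; consequently $\nu_{m,\tau}(A)=m^2$ if $\det(\tau)=1$ and $\nu_{m,\tau}(A)=0$ if $\det(\tau)=-1$. (2) If $\tau^3=1$, then $\nu_{3,\tau}(A)=(\mathrm{Tr}(\tau)+\det(\tau))^2+(\mathrm{Tr}(\tau)+1)(1-\det(\tau))$; consequently $\nu_{3,\tau}(A)=9$ if $\tau=\mathrm{id}$ and $\nu_{3,\tau}(A)=0$ if $\tau\neq\mathrm{id}$.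
   Context: $k$ is algebraically closed of characteristic $0$. $A=k\langle g,x,y\mid gx=-xg,\ gy=-yg,\ xy=-yx,\ g^2=1,\ x^2=y^2=0\rangle$ with $g$ grouplike, $\Delta(x)=x\otimes g+1\otimes x$, $\Delta(y)=y\otimes g+1\otimes y$, $\varepsilon(x)=\varepsilon(y)=0$, $S(g)=g$, $S(x)=gx$, $S(y)=gy$. Every Hopf automorphism of $A$ fixes $g$ and acts linearly and invertibly on $\mathrm{span}(x,y)$. For a Hopf automorphism $\tau$ whose order divides $m$, define $P_{m-1,\tau}(h)=\sum(\tau^{m-1}\cdot h_1)(\tau^{m-2}\cdot h_2)\cdots(\tau\cdot h_{m-1})$ (Sweedler notation) and the twisted Frobenius–Schur indicator $\nu_{m,\tau}(A)=\mathrm{Tr}(S\circ P_{m-1,\tau})$, the trace of the linear map $S\circ P_{m-1,\tau}:A\to A$. $\mathrm{Tr}(\tau)=a+d$ and $\det(\tau)=ad-bc$. *)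

theory Defs
  imports "HOL-Computational_Algebra.Polynomial"
begin

text \<open>The 8-dimensional Hopf algebra A with basis the monomials g^i x^j y^k,
  i,j,k in {0,1}.  A basis index (i,j,k) is encoded as a triple of booleans
  (True = exponent 1).\<close>

type_synonym bidx = "bool \<times> bool \<times> bool"
type_synonym 'k hA = "bidx \<Rightarrow> 'k"
type_synonym 'k hAA = "bidx \<times> bidx \<Rightarrow> 'k"

definition ex :: "bool \<Rightarrow> nat" where "ex b = (if b then 1 else 0)"

definition bvec :: "bidx \<Rightarrow> 'k::field hA" where
  "bvec b = (\<lambda>b'. if b' = b then 1 else 0)"

definition oneA :: "'k::field hA" where "oneA = bvec (False, False, False)"
definition gA :: "'k::field hA" where "gA = bvec (True, False, False)"
definition xA :: "'k::field hA" where "xA = bvec (False, True, False)"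
definition yA :: "'k::field hA" where "yA = bvec (False, False, True)"

text \<open>Product of basis monomials, using gx=-xg, gy=-yg, xy=-yx, g^2=1, x^2=y^2=0:
  (g^i x^j y^k)(g^i' x^j' y^k') = (-1)^(i'(j+k) + k j') g^(i+i') x^(j+j') y^(k+k').\<close>
definition multB :: "bidx \<Rightarrow> bidx \<Rightarrow> 'k::field hA" where
  "multB b b' = (case b of (i, j, k) \<Rightarrow> case b' of (i', j', k') \<Rightarrow>
     (if (j \<and> j') \<or> (k \<and> k') then (\<lambda>_. 0)
      else (\<lambda>c. (-1) ^ (ex i' * (ex j + ex k) + ex k * ex j') * bvec (i \<noteq> i', j \<or> j', k \<or> k') c)))"

definition multA :: "'k::field hA \<Rightarrow> 'k hA \<Rightarrow> 'k hA" where
  "multA v w = (\<lambda>c. \<Sum>b\<in>UNIV. \<Sum>b'\<in>UNIV. v b * w b' * multB b b' c)"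

definition addA :: "'k::field hA \<Rightarrow> 'k hA \<Rightarrow> 'k hA" where
  "addA v w = (\<lambda>c. v c + w c)"

definition smultA :: "'k::field \<Rightarrow> 'k hA \<Rightarrow> 'k hA" where
  "smultA s v = (\<lambda>c. s * v c)"

definition tens :: "'k::field hA \<Rightarrow> 'k hA \<Rightarrow> 'k hAA" where
  "tens v w = (\<lambda>(b1, b2). v b1 * w b2)"

definition multAA :: "'k::field hAA \<Rightarrow> 'k hAA \<Rightarrow> 'k hAA" where
  "multAA t s = (\<lambda>(c1, c2). \<Sum>b1\<in>UNIV. \<Sum>b2\<in>UNIV. \<Sum>b1'\<in>UNIV. \<Sum>b2'\<in>UNIV.
      t (b1, b2) * s (b1', b2') * multB b1 b1' c1 * multB b2 b2' c2)"

definition pwA :: "'k::field hA \<Rightarrow> bool \<Rightarrow> 'k hA" where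
  "pwA v e = (if e then v else oneA)"

definition pwAA :: "'k::field hAA \<Rightarrow> bool \<Rightarrow> 'k hAA" where
  "pwAA t e = (if e then t else tens oneA oneA)"

definition DeltaB :: "bidx \<Rightarrow> 'k::field hAA" where
  "DeltaB b = (case b of (i, j, k) \<Rightarrow>
     multAA (multAA (pwAA (tens gA gA) i)
                    (pwAA (\<lambda>p. tens xA gA p + tens oneA xA p) j))
            (pwAA (\<lambda>p. tens yA gA p + tens oneA yA p) k))"

definition epsA :: "'k::field hA \<Rightarrow> 'k" where
  "epsA v = (\<Sum>b\<in>UNIV. (case b of (i, j, k) \<Rightarrow> if \<not> j \<and> \<not> k then v b else 0))"

text \<open>Antipode: anti-algebra map with S(g)=g, S(x)=gx, S(y)=gy:
  S(g^i x^j y^k) = S(y)^k S(x)^j S(g)^i.\<close>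
definition SB :: "bidx \<Rightarrow> 'k::field hA" where
  "SB b = (case b of (i, j, k) \<Rightarrow>
     multA (multA (pwA (multA gA yA) k) (pwA (multA gA xA) j)) (pwA gA i))"

definition SA :: "'k::field hA \<Rightarrow> 'k hA" where
  "SA v = (\<lambda>c. \<Sum>b\<in>UNIV. v b * SB b c)"

definition tauB :: "'k::field \<Rightarrow> 'k \<Rightarrow> 'k \<Rightarrow> 'k \<Rightarrow> bidx \<Rightarrow> 'k hA" where
  "tauB a b c d bb = (case bb of (i, j, k) \<Rightarrow>
     multA (multA (pwA gA i) (pwA (addA (smultA a xA) (smultA b yA)) j))
           (pwA (addA (smultA c xA) (smultA d yA)) k))"

definition tauA :: "'k::field \<Rightarrow> 'k \<Rightarrow> 'k \<Rightarrow> 'k \<Rightarrow> 'k hA \<Rightarrow> 'k hA" where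
  "tauA a b c d v = (\<lambda>e. \<Sum>bb\<in>UNIV. v bb * tauB a b c d bb e)"

definition conv :: "('k::field hA \<Rightarrow> 'k hA) \<Rightarrow> ('k hA \<Rightarrow> 'k hA) \<Rightarrow> 'k hA \<Rightarrow> 'k hA" where
  "conv f1 f2 v = (\<lambda>e. \<Sum>b\<in>UNIV. v b * (\<Sum>b1\<in>UNIV. \<Sum>b2\<in>UNIV.
       DeltaB b (b1, b2) * multA (f1 (bvec b1)) (f2 (bvec b2)) e))"

text \<open>Iterated convolution: conv_list [f1,...,fn] h = sum f1(h_1) ... fn(h_n)
  (well defined by coassociativity); the empty convolution is the unit u o epsilon.\<close>
fun conv_list :: "('k::field hA \<Rightarrow> 'k hA) list \<Rightarrow> 'k hA \<Rightarrow> 'k hA" where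
  "conv_list [] = (\<lambda>v. smultA (epsA v) oneA)"
| "conv_list [f] = f"
| "conv_list (f # fs) = conv f (conv_list fs)"

text \<open>P_{m-1,tau}(h) = sum (tau^(m-1) h_1)(tau^(m-2) h_2) ... (tau h_(m-1)).\<close>
definition Pmap :: "nat \<Rightarrow> ('k::field hA \<Rightarrow> 'k hA) \<Rightarrow> 'k hA \<Rightarrow> 'k hA" where
  "Pmap m tau = conv_list (map (\<lambda>i. tau ^^ i) (rev [1..<m]))"

definition traceA :: "('k::field hA \<Rightarrow> 'k hA) \<Rightarrow> 'k" where
  "traceA f = (\<Sum>b\<in>UNIV. f (bvec b) b)"

definition nu :: "nat \<Rightarrow> ('k::field hA \<Rightarrow> 'k hA) \<Rightarrow> 'k" where
  "nu m tau = traceA (SA \<circ> Pmap m tau)"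

end

theory Submission
  imports Defs
begin

text \<open>Every map involved is explicit on the monomial basis, so both indicators are finite
  computations in coordinates. If tau^2 = id and m = 2n + 2, then P(m-1, tau) is the iterated
  convolution of the alternating list tau, id, tau, ..., id, tau; its values on the basis follow by
  induction on n, and the trace of S o P(m-1, tau) comes out as 2(n + 1)^2 (1 + det tau).
  For m = 3 the map S o (tau^2 * tau) is computed directly. Its trace vanishes when
  tau^3 = id and tau is not the identity by Cayley-Hamilton: tau^3 = id forces either tau to be a
  primitive cube root of unity times the identity, or tr^2 = det and tr det = -1.\<close>

lemma sum_UNIV_bidx: "(\<Sum>b\<in>(UNIV::bidx set). f b) =
  f (False,False,False) + f (False,False,True) + f (False,True,False) + f (False,True,True) +
  f (True,False,False) + f (True,False,True) + f (True,True,False) + f (True,True,True)"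
proof -
  have UNIV_eq: "(UNIV::bidx set) = {(False,False,False), (False,False,True), (False,True,False),
    (False,True,True), (True,False,False), (True,False,True), (True,True,False), (True,True,True)}"
    by (auto simp: UNIV_bool)
  show ?thesis unfolding UNIV_eq by (simp add: add.assoc)
qed

text \<open>Coordinates in the basis 1, y, x, xy, g, gy, gx, gxy, i.e.\ g^i x^j y^k is coordinate 4i + 2j + k.\<close>
definition vecA :: "'k \<Rightarrow> 'k \<Rightarrow> 'k \<Rightarrow> 'k \<Rightarrow> 'k \<Rightarrow> 'k \<Rightarrow> 'k \<Rightarrow> 'k \<Rightarrow> bidx \<Rightarrow> 'k" where
  "vecA p0 p1 p2 p3 p4 p5 p6 p7 = (\<lambda>(i,j,k).
     if i then (if j then (if k then p7 else p6) else (if k then p5 else p4))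
     else (if j then (if k then p3 else p2) else (if k then p1 else p0)))"

lemma vecA_apply [simp]:
  "vecA p0 p1 p2 p3 p4 p5 p6 p7 (False,False,False) = p0"
  "vecA p0 p1 p2 p3 p4 p5 p6 p7 (False,False,True) = p1"
  "vecA p0 p1 p2 p3 p4 p5 p6 p7 (False,True,False) = p2"
  "vecA p0 p1 p2 p3 p4 p5 p6 p7 (False,True,True) = p3"
  "vecA p0 p1 p2 p3 p4 p5 p6 p7 (True,False,False) = p4"
  "vecA p0 p1 p2 p3 p4 p5 p6 p7 (True,False,True) = p5"
  "vecA p0 p1 p2 p3 p4 p5 p6 p7 (True,True,False) = p6"
  "vecA p0 p1 p2 p3 p4 p5 p6 p7 (True,True,True) = p7"
  by (simp_all add: vecA_def)

lemma vecA_coords: "v = vecA (v (False,False,False)) (v (False,False,True)) (v (False,True,False))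
  (v (False,True,True)) (v (True,False,False)) (v (True,False,True)) (v (True,True,False))
  (v (True,True,True))"
  by (rule ext) (auto simp: vecA_def)

lemma vecA_eq_iff: "vecA p0 p1 p2 p3 p4 p5 p6 p7 = vecA q0 q1 q2 q3 q4 q5 q6 q7 \<longleftrightarrow>
   p0 = q0 \<and> p1 = q1 \<and> p2 = q2 \<and> p3 = q3 \<and> p4 = q4 \<and> p5 = q5 \<and> p6 = q6 \<and> p7 = q7"
  by (metis vecA_apply)

lemma bvec_vecA:
  "bvec (False,False,False) = vecA 1 0 0 0 0 0 0 0"
  "bvec (False,False,True) = vecA 0 1 0 0 0 0 0 0"
  "bvec (False,True,False) = vecA 0 0 1 0 0 0 0 0"
  "bvec (False,True,True) = vecA 0 0 0 1 0 0 0 0"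
  "bvec (True,False,False) = vecA 0 0 0 0 1 0 0 0"
  "bvec (True,False,True) = vecA 0 0 0 0 0 1 0 0"
  "bvec (True,True,False) = vecA 0 0 0 0 0 0 1 0"
  "bvec (True,True,True) = vecA 0 0 0 0 0 0 0 1"
  by (subst vecA_coords, simp add: bvec_def)+

lemma generators_vecA:
  "oneA = vecA 1 0 0 0 0 0 0 0" "gA = vecA 0 0 0 0 1 0 0 0"
  "xA = vecA 0 0 1 0 0 0 0 0" "yA = vecA 0 1 0 0 0 0 0 0"
  by (simp_all add: oneA_def gA_def xA_def yA_def bvec_vecA)

lemma addA_vecA: "addA (vecA p0 p1 p2 p3 p4 p5 p6 p7) (vecA q0 q1 q2 q3 q4 q5 q6 q7) =
   vecA (p0+q0) (p1+q1) (p2+q2) (p3+q3) (p4+q4) (p5+q5) (p6+q6) (p7+q7)"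
  by (rule ext) (auto simp: addA_def vecA_def)

lemma smultA_vecA: "smultA s (vecA p0 p1 p2 p3 p4 p5 p6 p7) =
   vecA (s*p0) (s*p1) (s*p2) (s*p3) (s*p4) (s*p5) (s*p6) (s*p7)"
  by (rule ext) (auto simp: smultA_def vecA_def)

lemma multA_vecA: "multA (vecA p0 p1 p2 p3 p4 p5 p6 p7) (vecA q0 q1 q2 q3 q4 q5 q6 q7) =
  vecA (p0*q0 + p4*q4)
    (p0*q1 + p1*q0 + p4*q5 - p5*q4)
    (p0*q2 + p2*q0 + p4*q6 - p6*q4)
    (p0*q3 - p1*q2 + p2*q1 + p3*q0 + p4*q7 + p5*q6 - p6*q5 + p7*q4)
    (p0*q4 + p4*q0)
    (p0*q5 - p1*q4 + p4*q1 + p5*q0)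
    (p0*q6 - p2*q4 + p4*q2 + p6*q0)
    (p0*q7 + p1*q6 - p2*q5 + p3*q4 + p4*q3 - p5*q2 + p6*q1 + p7*q0)"
  by (rule ext)
    (simp add: multA_def sum_UNIV_bidx multB_def ex_def split_beta;
     auto simp: vecA_def bvec_def split_beta algebra_simps)

lemma tauB_vecA:
  "tauB a b c d (False,False,False) = vecA 1 0 0 0 0 0 0 0"
  "tauB a b c d (False,False,True) = vecA 0 d c 0 0 0 0 0"
  "tauB a b c d (False,True,False) = vecA 0 b a 0 0 0 0 0"
  "tauB a b c d (False,True,True) = vecA 0 0 0 (a*d-b*c) 0 0 0 0"
  "tauB a b c d (True,False,False) = vecA 0 0 0 0 1 0 0 0"
  "tauB a b c d (True,False,True) = vecA 0 0 0 0 0 d c 0"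
  "tauB a b c d (True,True,False) = vecA 0 0 0 0 0 b a 0"
  "tauB a b c d (True,True,True) = vecA 0 0 0 0 0 0 0 (a*d-b*c)"
  by (simp_all add: tauB_def pwA_def generators_vecA addA_vecA smultA_vecA multA_vecA
      vecA_eq_iff algebra_simps)

lemma tauA_vecA: "tauA a b c d (vecA p0 p1 p2 p3 p4 p5 p6 p7) =
  vecA p0 (d*p1 + b*p2) (c*p1 + a*p2) ((a*d-b*c)*p3) p4 (d*p5 + b*p6) (c*p5 + a*p6) ((a*d-b*c)*p7)"
  unfolding tauA_def sum_UNIV_bidx vecA_apply tauB_vecA
  by (subst vecA_coords) (simp add: algebra_simps)

lemma tauA_eq_id_iff: "tauA a b c d = id \<longleftrightarrow> a = 1 \<and> b = 0 \<and> c = 0 \<and> d = 1"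
proof
  assume "tauA a b c d = id"
  then have "tauA a b c d (vecA 0 0 1 0 0 0 0 0) = vecA 0 0 1 0 0 0 0 0"
    and "tauA a b c d (vecA 0 1 0 0 0 0 0 0) = vecA 0 1 0 0 0 0 0 0"
    by simp_all
  then show "a = 1 \<and> b = 0 \<and> c = 0 \<and> d = 1" by (simp add: tauA_vecA vecA_eq_iff)
next
  assume "a = 1 \<and> b = 0 \<and> c = 0 \<and> d = 1"
  then show "tauA a b c d = id" by (intro ext, subst (1 2) vecA_coords) (simp add: tauA_vecA)
qed

lemma SB_vecA:
  "SB (False,False,False) = vecA 1 0 0 0 0 0 0 0"
  "SB (False,False,True) = vecA 0 0 0 0 0 1 0 0"
  "SB (False,True,False) = vecA 0 0 0 0 0 0 1 0"
  "SB (False,True,True) = vecA 0 0 0 1 0 0 0 0"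
  "SB (True,False,False) = vecA 0 0 0 0 1 0 0 0"
  "SB (True,False,True) = vecA 0 (-1) 0 0 0 0 0 0"
  "SB (True,True,False) = vecA 0 0 (-1) 0 0 0 0 0"
  "SB (True,True,True) = vecA 0 0 0 0 0 0 0 1"
  by (simp_all add: SB_def pwA_def generators_vecA multA_vecA)

lemma SA_vecA: "SA (vecA p0 p1 p2 p3 p4 p5 p6 p7) = vecA p0 (-p5) (-p6) p3 p4 p1 p2 p7"
  unfolding SA_def sum_UNIV_bidx vecA_apply SB_vecA by (subst vecA_coords) simp

lemma traceA_vecA: "traceA f =
  f (vecA 1 0 0 0 0 0 0 0) (False,False,False) + f (vecA 0 1 0 0 0 0 0 0) (False,False,True) +
  f (vecA 0 0 1 0 0 0 0 0) (False,True,False) + f (vecA 0 0 0 1 0 0 0 0) (False,True,True) +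
  f (vecA 0 0 0 0 1 0 0 0) (True,False,False) + f (vecA 0 0 0 0 0 1 0 0) (True,False,True) +
  f (vecA 0 0 0 0 0 0 1 0) (True,True,False) + f (vecA 0 0 0 0 0 0 0 1) (True,True,True)"
  unfolding traceA_def sum_UNIV_bidx bvec_vecA ..

lemma multAA_tens: "multAA (tens u v) (tens u' v') = tens (multA u u') (multA v v')"
proof (rule ext, clarify)
  fix c1 c2
  have "multAA (tens u v) (tens u' v') (c1,c2) =
    (\<Sum>b1\<in>UNIV. \<Sum>b2\<in>UNIV. \<Sum>b1'\<in>UNIV. \<Sum>b2'\<in>UNIV.
      (u b1 * u' b1' * multB b1 b1' c1) * (v b2 * v' b2' * multB b2 b2' c2))"
    unfolding multAA_def tens_def by (simp add: algebra_simps)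
  also have "\<dots> = tens (multA u u') (multA v v') (c1,c2)"
    unfolding tens_def multA_def by (simp add: sum_product)
  finally show "multAA (tens u v) (tens u' v') (c1,c2) = tens (multA u u') (multA v v') (c1,c2)" .
qed

lemma multAA_add_left: "multAA (\<lambda>p. t p + t' p) s = (\<lambda>p. multAA t s p + multAA t' s p)"
  unfolding multAA_def by (rule ext) (simp add: split_beta algebra_simps sum.distrib)

lemma multAA_add_right: "multAA s (\<lambda>p. t p + t' p) = (\<lambda>p. multAA s t p + multAA s t' p)"
  unfolding multAA_def by (rule ext) (simp add: split_beta algebra_simps sum.distrib)

lemma conv_bvec:
  "conv f1 f2 (bvec b) =
     (\<lambda>e. \<Sum>b1\<in>UNIV. \<Sum>b2\<in>UNIV. DeltaB b (b1,b2) * multA (f1 (bvec b1)) (f2 (bvec b2)) e)"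
proof -
  have "(\<Sum>b'\<in>UNIV. bvec b b' * X b') = X b" for X :: "bidx \<Rightarrow> 'a"
  proof -
    have "(\<Sum>b'\<in>UNIV. bvec b b' * X b') = (\<Sum>b'\<in>UNIV. if b' = b then X b' else 0)"
      by (rule sum.cong) (auto simp: bvec_def)
    then show ?thesis by simp
  qed
  then show ?thesis unfolding conv_def by simp
qed

text \<open>Sweedler's formula for the convolution on the basis, read off from the coproduct:
  e.g.\ \<Delta>(xy) = xy \<otimes> 1 + x \<otimes> gy - y \<otimes> gx + 1 \<otimes> xy.\<close>
lemma conv_vecA:
  "conv f1 f2 (vecA 1 0 0 0 0 0 0 0) = multA (f1 (vecA 1 0 0 0 0 0 0 0)) (f2 (vecA 1 0 0 0 0 0 0 0))"
  "conv f1 f2 (vecA 0 1 0 0 0 0 0 0) =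
     addA (multA (f1 (vecA 1 0 0 0 0 0 0 0)) (f2 (vecA 0 1 0 0 0 0 0 0)))
          (multA (f1 (vecA 0 1 0 0 0 0 0 0)) (f2 (vecA 0 0 0 0 1 0 0 0)))"
  "conv f1 f2 (vecA 0 0 1 0 0 0 0 0) =
     addA (multA (f1 (vecA 1 0 0 0 0 0 0 0)) (f2 (vecA 0 0 1 0 0 0 0 0)))
          (multA (f1 (vecA 0 0 1 0 0 0 0 0)) (f2 (vecA 0 0 0 0 1 0 0 0)))"
  "conv f1 f2 (vecA 0 0 0 1 0 0 0 0) =
     addA (addA (addA (multA (f1 (vecA 1 0 0 0 0 0 0 0)) (f2 (vecA 0 0 0 1 0 0 0 0)))
       (smultA (-1) (multA (f1 (vecA 0 1 0 0 0 0 0 0)) (f2 (vecA 0 0 0 0 0 0 1 0)))))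
       (multA (f1 (vecA 0 0 1 0 0 0 0 0)) (f2 (vecA 0 0 0 0 0 1 0 0))))
       (multA (f1 (vecA 0 0 0 1 0 0 0 0)) (f2 (vecA 1 0 0 0 0 0 0 0)))"
  "conv f1 f2 (vecA 0 0 0 0 1 0 0 0) = multA (f1 (vecA 0 0 0 0 1 0 0 0)) (f2 (vecA 0 0 0 0 1 0 0 0))"
  "conv f1 f2 (vecA 0 0 0 0 0 1 0 0) =
     addA (multA (f1 (vecA 0 0 0 0 1 0 0 0)) (f2 (vecA 0 0 0 0 0 1 0 0)))
          (multA (f1 (vecA 0 0 0 0 0 1 0 0)) (f2 (vecA 1 0 0 0 0 0 0 0)))"
  "conv f1 f2 (vecA 0 0 0 0 0 0 1 0) =
     addA (multA (f1 (vecA 0 0 0 0 1 0 0 0)) (f2 (vecA 0 0 0 0 0 0 1 0)))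
          (multA (f1 (vecA 0 0 0 0 0 0 1 0)) (f2 (vecA 1 0 0 0 0 0 0 0)))"
  "conv f1 f2 (vecA 0 0 0 0 0 0 0 1) =
     addA (addA (addA (multA (f1 (vecA 0 0 0 0 1 0 0 0)) (f2 (vecA 0 0 0 0 0 0 0 1)))
       (smultA (-1) (multA (f1 (vecA 0 0 0 0 0 1 0 0)) (f2 (vecA 0 0 1 0 0 0 0 0)))))
       (multA (f1 (vecA 0 0 0 0 0 0 1 0)) (f2 (vecA 0 1 0 0 0 0 0 0))))
       (multA (f1 (vecA 0 0 0 0 0 0 0 1)) (f2 (vecA 0 0 0 0 1 0 0 0)))"
  unfolding addA_def smultA_def
  apply (simp_all only: bvec_vecA[symmetric] conv_bvec)
  apply (simp_all add: DeltaB_def pwAA_def multAA_tens multAA_add_left multAA_add_right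
      multA_vecA generators_vecA)
  apply (simp_all add: tens_def sum_UNIV_bidx bvec_vecA)
  done

fun alternating :: "('k hA \<Rightarrow> 'k hA) \<Rightarrow> nat \<Rightarrow> ('k hA \<Rightarrow> 'k hA) list" where
  "alternating t 0 = [t]"
| "alternating t (Suc n) = t # id # alternating t n"

lemma map_funpow_involution:
  assumes "t \<circ> t = id"
  shows "map (\<lambda>i. t ^^ i) (rev [1..<2*n+2]) = alternating t n"
proof -
  have "t ^^ 2 = id"
    using assms by (simp add: numeral_2_eq_2)
  then have even: "t ^^ (2*k) = id" for k
    by (metis funpow_mult id_funpow)
  show ?thesis
  proof (induction n)
    case 0
    then show ?case by simp
  next
    case (Suc n)
    have "[1..<2*Suc n+2] = [1..<2*n+2] @ [2*n+2, 2*n+3]"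
      by (simp add: upt_Suc_append)
    moreover have "t ^^ (2*n+2) = id"
      using even[of "Suc n"] by simp
    moreover have "t ^^ (2*n+3) = t"
      using even[of "Suc n"] by (simp add: numeral_3_eq_3 funpow_Suc_right[symmetric])
    ultimately show ?case using Suc by simp
  qed
qed

lemma Pmap_involution:
  "t \<circ> t = id \<Longrightarrow> Pmap (2*n+2) t = conv_list (alternating t n)"
  unfolding Pmap_def by (simp only: map_funpow_involution)

lemma conv_list_Cons: "fs \<noteq> [] \<Longrightarrow> conv_list (f # fs) = conv f (conv_list fs)"
  by (cases fs) auto

lemma alternating_ne_Nil: "alternating t n \<noteq> []"
  by (cases n) auto

lemma conv_list_alternating_vecA:
  fixes a b c d :: "'k::field" and n :: nat
  defines "Q \<equiv> conv_list (alternating (tauA a b c d) n)"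
  shows "Q (vecA 1 0 0 0 0 0 0 0) = vecA 1 0 0 0 0 0 0 0 \<and>
    Q (vecA 0 1 0 0 0 0 0 0) = vecA 0 (d*(of_nat n+1)) (c*(of_nat n+1)) 0 0 (-of_nat n) 0 0 \<and>
    Q (vecA 0 0 1 0 0 0 0 0) = vecA 0 (b*(of_nat n+1)) (a*(of_nat n+1)) 0 0 0 (-of_nat n) 0 \<and>
    Q (vecA 0 0 0 1 0 0 0 0) = vecA 0 0 0 ((of_nat n+1)^2*(a*d-b*c) + of_nat n^2) 0 0 0
      (-of_nat n*(of_nat n+1)*(a+d)) \<and>
    Q (vecA 0 0 0 0 1 0 0 0) = vecA 0 0 0 0 1 0 0 0 \<and>
    Q (vecA 0 0 0 0 0 1 0 0) = vecA 0 (of_nat n) 0 0 0 (d*(of_nat n+1)) (c*(of_nat n+1)) 0 \<and>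
    Q (vecA 0 0 0 0 0 0 1 0) = vecA 0 0 (of_nat n) 0 0 (b*(of_nat n+1)) (a*(of_nat n+1)) 0 \<and>
    Q (vecA 0 0 0 0 0 0 0 1) = vecA 0 0 0 (of_nat n*(of_nat n+1)*(a+d)) 0 0 0
      ((of_nat n+1)^2*(a*d-b*c) + of_nat n^2)"
  unfolding Q_def
proof (induction n)
  case 0
  then show ?case by (simp add: tauA_vecA)
next
  case (Suc n)
  show ?case
    unfolding alternating.simps conv_list_Cons[OF alternating_ne_Nil]
      conv_list_Cons[OF list.distinct(2)]
    by (simp add: conv_vecA Suc.IH tauA_vecA multA_vecA addA_vecA smultA_vecA vecA_eq_iff)
      (simp add: algebra_simps power2_eq_square)
qed

lemma nu_involution:
  fixes a b c d :: "'k::field"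
  assumes "tauA a b c d \<circ> tauA a b c d = id"
  shows "nu (2*n+2) (tauA a b c d) = 2 * (of_nat n + 1)^2 * (1 + (a*d - b*c))"
  unfolding nu_def Pmap_involution[OF assms] traceA_vecA
  using conv_list_alternating_vecA[of a b c d n]
  by (simp add: SA_vecA algebra_simps power2_eq_square)

lemma nu_three:
  fixes a b c d :: "'k::field"
  shows "nu 3 (tauA a b c d) = (a + d + (a*d - b*c))^2 + (a + d + 1) * (1 - (a*d - b*c))"
proof -
  have "Pmap 3 (tauA a b c d) = conv (tauA a b c d \<circ> tauA a b c d) (tauA a b c d)"
    by (simp add: Pmap_def upt_rec numeral_2_eq_2)
  then show ?thesis
    unfolding nu_def traceA_vecA
    by (simp add: conv_vecA tauA_vecA multA_vecA addA_vecA smultA_vecA SA_vecA)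
      (simp add: algebra_simps power2_eq_square)
qed

lemma tauA_cube_eq_id:
  assumes "tauA a b c d ^^ 3 = id"
  shows "d*(d*b+b*a)+b*(c*b+a*a) = 0" and "c*(d*b+b*a)+a*(c*b+a*a) = 1"
    and "d*(d*d+b*c)+b*(c*d+a*c) = 1" and "c*(d*d+b*c)+a*(c*d+a*c) = 0"
proof -
  have "(tauA a b c d ^^ 3) (vecA 0 0 1 0 0 0 0 0) = vecA 0 0 1 0 0 0 0 0"
    and "(tauA a b c d ^^ 3) (vecA 0 1 0 0 0 0 0 0) = vecA 0 1 0 0 0 0 0 0"
    using assms by simp_all
  then show "d*(d*b+b*a)+b*(c*b+a*a) = 0" and "c*(d*b+b*a)+a*(c*b+a*a) = 1"
    and "d*(d*d+b*c)+b*(c*d+a*c) = 1" and "c*(d*d+b*c)+a*(c*d+a*c) = 0"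
    by (simp_all add: numeral_3_eq_3 tauA_vecA vecA_eq_iff)
qed

text \<open>The hypotheses say that the cube of N = [[d, b], [c, a]], the matrix of tau on span(y, x),
  is the identity. By Cayley-Hamilton N^3 = (T^2 - D) N - T D with T = tr N, D = det N, so either
  N is scalar or T^2 = D and T D = -1.\<close>
lemma trace_det_of_order_three:
  fixes a b c d :: "'k::field"
  assumes e1: "d*(d*b+b*a)+b*(c*b+a*a) = 0" and e2: "c*(d*b+b*a)+a*(c*b+a*a) = 1"
    and e3: "d*(d*d+b*c)+b*(c*d+a*c) = 1" and e4: "c*(d*d+b*c)+a*(c*d+a*c) = 0"
    and not_id: "\<not> (a = 1 \<and> b = 0 \<and> c = 0 \<and> d = 1)"
  shows "(a + d + (a*d - b*c))^2 + (a + d + 1) * (1 - (a*d - b*c)) = 0"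
proof -
  define T D where "T = a + d" and "D = a*d - b*c"
  define t where "t = T^2 - D"
  have tb: "t * b = 0" and tc: "t * c = 0" using e1 e4 unfolding t_def T_def D_def by algebra+
  have ta: "t * a - T * D = 1" and td: "t * d - T * D = 1"
    using e2 e3 unfolding t_def T_def D_def by algebra+
  show ?thesis
  proof (cases "t = 0")
    case True
    then have "D = T^2" and "T * D = -1"
      using ta unfolding t_def by (simp_all add: minus_equation_iff)
    then have "(T + D)^2 + (T + 1) * (1 - D) = 0" by algebra
    then show ?thesis unfolding T_def D_def .
  next
    case False
    with tb tc have b: "b = 0" and c: "c = 0" by simp_all
    have "t * (a - d) = 0" using ta td by algebra
    with False have d: "d = a" by simp
    have "a^3 = 1" using ta unfolding t_def T_def D_def b c d by algebra
    then have "(a - 1) * (a^2 + a + 1) = 0" by algebra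
    moreover have "a \<noteq> 1" using not_id b c d by auto
    ultimately have "a^2 + a + 1 = 0" by simp
    then show ?thesis unfolding b c d by algebra
  qed
qed

lemma nu_even:
  fixes a b c d :: "'k::field_char_0"
  assumes "tauA a b c d \<circ> tauA a b c d = id" and "m > 0" and "even m"
  shows "nu m (tauA a b c d) = of_nat m ^ 2 / 2 * (1 + (a*d - b*c))"
proof -
  from \<open>even m\<close> obtain k where "m = 2*k" by (rule evenE)
  with \<open>m > 0\<close> obtain n where m: "m = 2*n + 2" by (cases k) auto
  have "(of_nat m :: 'k) ^ 2 / 2 = 2 * (of_nat n + 1)^2"
    by (simp add: m power2_eq_square algebra_simps)
  then show ?thesis using nu_involution[OF assms(1), of n] m by simp
qed

lemma nu_three_order_three:
  fixes a b c d :: "'k::field"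
  assumes "tauA a b c d ^^ 3 = id" and "tauA a b c d \<noteq> id"
  shows "nu 3 (tauA a b c d) = 0"
  using assms by (simp add: nu_three trace_det_of_order_three tauA_cube_eq_id tauA_eq_id_iff)

theorem proposition6p2:
  fixes a b c d :: "'k::field_char_0"
  assumes alg_closed: "\<forall>p::'k poly. degree p > 0 \<longrightarrow> (\<exists>z. poly p z = 0)"
    and invertible: "a * d - b * c \<noteq> 0"
  shows "(\<forall>m::nat. tauA a b c d \<circ> tauA a b c d = id \<and> m > 0 \<and> even m \<longrightarrow>
            nu m (tauA a b c d) = of_nat m ^ 2 / 2 * (1 + (a * d - b * c))
          \<and> (a * d - b * c = 1 \<longrightarrow> nu m (tauA a b c d) = of_nat m ^ 2)
          \<and> (a * d - b * c = -1 \<longrightarrow> nu m (tauA a b c d) = 0))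
       \<and> (tauA a b c d ^^ 3 = id \<longrightarrow>
            nu 3 (tauA a b c d) = (a + d + (a * d - b * c)) ^ 2 + (a + d + 1) * (1 - (a * d - b * c))
          \<and> (tauA a b c d = id \<longrightarrow> nu 3 (tauA a b c d) = 9)
          \<and> (tauA a b c d \<noteq> id \<longrightarrow> nu 3 (tauA a b c d) = 0))"
proof (intro conjI allI impI)
  fix m :: nat
  assume "tauA a b c d \<circ> tauA a b c d = id \<and> m > 0 \<and> even m"
  then have nu_m: "nu m (tauA a b c d) = of_nat m ^ 2 / 2 * (1 + (a * d - b * c))"
    by (intro nu_even) auto
  then show "nu m (tauA a b c d) = of_nat m ^ 2 / 2 * (1 + (a * d - b * c))" .
  show "nu m (tauA a b c d) = of_nat m ^ 2" if "a * d - b * c = 1"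
    using nu_m that by simp
  show "nu m (tauA a b c d) = 0" if "a * d - b * c = -1"
    using nu_m that by simp
next
  show "nu 3 (tauA a b c d) = 9" if "tauA a b c d = id"
    using that by (simp add: nu_three tauA_eq_id_iff)
qed (use nu_three nu_three_order_three in blast)+

end
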